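(* Fix a nonabelian finite simple group $S$, a positive integer $t$ and a prime $p$, and set $N=S^t$. Assume that every coset of $S$ in $\mathrm{Aut}(S)$ contains an $S$-conjugacy class of $p$-elements of size at least $M$. Then $f_p(N)\ge M^t$.
   Context: For a subset $X$ of a finite group, $\mathrm{Ord}(X,p)$ is the set of elements of $X$ of $p$-power order. For $N=S^t$ with $S$ nonabelian simple, $f_p(N)=\min\{|\mathrm{Ord}(N\alpha,p)| : \alpha \in \mathrm{Aut}(N) \text{ a } p\text{-element}\}$, where $N$ is identified with $\mathrm{Inn}(N)\le\mathrm{Aut}(N)$ and $S$ with $\mathrm{Inn}(S)\le\mathrm{Aut}(S)$. *)

theory Defs
  imports "HOL-Algebra.Algebra"
begin

definition inn :: "('a, 'b) monoid_scheme \<Rightarrow> 'a \<Rightarrow> ('a \<Rightarrow> 'a)" where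
  "inn G g = (\<lambda>x\<in>carrier G. g \<otimes>\<^bsub>G\<^esub> x \<otimes>\<^bsub>G\<^esub> inv\<^bsub>G\<^esub> g)"

definition Inn :: "('a, 'b) monoid_scheme \<Rightarrow> ('a \<Rightarrow> 'a) set" where
  "Inn G = inn G ` carrier G"

definition p_element :: "('a, 'b) monoid_scheme \<Rightarrow> nat \<Rightarrow> 'a \<Rightarrow> bool" where
  "p_element G p x \<longleftrightarrow> x \<in> carrier G \<and> (\<exists>k::nat. group.ord G x = p ^ k)"

definition Ord_p :: "('a, 'b) monoid_scheme \<Rightarrow> 'a set \<Rightarrow> nat \<Rightarrow> 'a set" where
  "Ord_p G Y p = {x \<in> Y. p_element G p x}"

definition power_group :: "('a, 'b) monoid_scheme \<Rightarrow> nat \<Rightarrow> (nat \<Rightarrow> 'a) monoid" where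
  "power_group S t = product_group {..<t} (\<lambda>_. S)"

text \<open>f_p(N) = min |Ord_p(N alpha, p)| over p-elements alpha of Aut(N), N identified with Inn(N).\<close>
definition f_p :: "nat \<Rightarrow> (nat \<Rightarrow> 'a) monoid \<Rightarrow> nat" where
  "f_p p N = Min {card (Ord_p (AutoGroup N) (Inn N #>\<^bsub>AutoGroup N\<^esub> \<alpha>) p) | \<alpha>.
                    p_element (AutoGroup N) p \<alpha>}"

definition S_class :: "('a, 'b) monoid_scheme \<Rightarrow> ('a \<Rightarrow> 'a) \<Rightarrow> ('a \<Rightarrow> 'a) set" where
  "S_class S \<beta> = {inn S g \<otimes>\<^bsub>AutoGroup S\<^esub> \<beta> \<otimes>\<^bsub>AutoGroup S\<^esub> inv\<^bsub>AutoGroup S\<^esub> (inn S g) | g. g \<in> carrier S}"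

end

(*
  An automorphism of N = S^t permutes the coordinates: two elements have disjoint supports iff
  one commutes with all conjugates of the other, since S is nonabelian simple, and this is
  invariant under automorphisms. So every automorphism has the form
  x \<mapsto> (j \<mapsto> \<psi>_j (x (\<sigma> j))) with \<psi>_j \<in> Aut S, and for n \<in> N the element
  inn n \<circ> \<alpha> has the same shape with \<psi>_j replaced by inn (n_j) \<circ> \<psi>_j. It is a p-element
  once, for one representative r of each cycle of \<sigma>, the product of the \<psi>'s along that
  cycle is a p-element of Aut S.
  Fix the coordinates of n away from the representatives; the product at r becomes inn (n_r) \<circ> c
  for some c \<in> Aut S. By hypothesis the coset (Inn S) c contains a p-element whose S-class has
  at least M elements, all of the form inn g \<circ> c, so at least M values of n_r work. Hence
  at least M^t elements n \<in> N make n\<alpha> a p-element, and n \<mapsto> n\<alpha> is injective since the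
  centre of N is trivial.
*)
theory Submission
  imports Defs "HOL-Computational_Algebra.Primes" "HOL-Combinatorics.Cycles"
begin

section \<open>p-elements and automorphisms\<close>

lemma (in group) p_element_iff_pow_eq_one:
  assumes "Factorial_Ring.prime p"
  shows "p_element G p x \<longleftrightarrow> x \<in> carrier G \<and> (\<exists>k. x [^] (p ^ k :: nat) = \<one>)"
proof
  assume "p_element G p x"
  then show "x \<in> carrier G \<and> (\<exists>k. x [^] (p ^ k :: nat) = \<one>)"
    unfolding p_element_def by (metis pow_ord_eq_1)
next
  assume "x \<in> carrier G \<and> (\<exists>k. x [^] (p ^ k :: nat) = \<one>)"
  then obtain k where x: "x \<in> carrier G" and "ord x dvd p ^ k" using pow_eq_id by blast
  then obtain i where "ord x = p ^ i" using divides_primepow_nat[OF assms] by blast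
  with x show "p_element G p x" unfolding p_element_def by blast
qed

lemma (in group) p_elements_common_exponent:
  assumes "finite R" "Factorial_Ring.prime p" "\<And>r. r \<in> R \<Longrightarrow> p_element G p (b r)"
  shows "\<exists>E. \<forall>r\<in>R. b r [^] (p ^ E :: nat) = \<one>"
proof -
  have "\<forall>r\<in>R. \<exists>e. ord (b r) = p ^ e" using assms(3) by (simp add: p_element_def)
  then obtain e where e: "\<And>r. r \<in> R \<Longrightarrow> ord (b r) = p ^ e r" by metis
  have "b r [^] (p ^ sum e R :: nat) = \<one>" if r: "r \<in> R" for r
  proof -
    have "ord (b r) dvd p ^ sum e R"
      using e[OF r] member_le_sum[of r R e, OF r _ assms(1)] by (simp add: le_imp_power_dvd)
    then show ?thesis using assms(3)[OF r] pow_eq_id by (simp add: p_element_def)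
  qed
  then show ?thesis by blast
qed

lemma p_element_hom_image:
  assumes "group_hom G H h" "Factorial_Ring.prime p" "p_element G p x"
  shows "p_element H p (h x)"
proof -
  interpret group_hom G H h by fact
  obtain k where x: "x \<in> carrier G" and "x [^]\<^bsub>G\<^esub> (p ^ k :: nat) = \<one>\<^bsub>G\<^esub>"
    using assms(3) G.p_element_iff_pow_eq_one[OF assms(2)] by blast
  then have "h x [^]\<^bsub>H\<^esub> (p ^ k :: nat) = \<one>\<^bsub>H\<^esub>"
    by (simp flip: hom_nat_pow)
  with x show ?thesis unfolding H.p_element_iff_pow_eq_one[OF assms(2)] by auto
qed

lemma AutoGroup_carrier: "carrier (AutoGroup G) = auto G"
  by (simp add: AutoGroup_def BijGroup_def)

lemma AutoGroup_one: "\<one>\<^bsub>AutoGroup G\<^esub> = (\<lambda>x\<in>carrier G. x)"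
  by (simp add: AutoGroup_def BijGroup_def)

lemma AutoGroup_mult:
  "f \<in> carrier (AutoGroup G) \<Longrightarrow> h \<in> carrier (AutoGroup G) \<Longrightarrow>
   f \<otimes>\<^bsub>AutoGroup G\<^esub> h = compose (carrier G) f h"
  by (simp add: AutoGroup_def BijGroup_def auto_def)

lemma AutoGroup_mult_apply:
  "f \<in> carrier (AutoGroup G) \<Longrightarrow> h \<in> carrier (AutoGroup G) \<Longrightarrow> x \<in> carrier G \<Longrightarrow>
   (f \<otimes>\<^bsub>AutoGroup G\<^esub> h) x = f (h x)"
  by (simp add: AutoGroup_mult compose_eq)

lemma AutoGroup_memI:
  "f \<in> hom G G \<Longrightarrow> bij_betw f (carrier G) (carrier G) \<Longrightarrow> f \<in> extensional (carrier G) \<Longrightarrow>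
   f \<in> carrier (AutoGroup G)"
  by (simp add: AutoGroup_carrier auto_def Bij_def)

lemma AutoGroup_hom: "f \<in> carrier (AutoGroup G) \<Longrightarrow> f \<in> hom G G"
  by (simp add: AutoGroup_carrier auto_def)

lemma AutoGroup_extensional: "f \<in> carrier (AutoGroup G) \<Longrightarrow> f \<in> extensional (carrier G)"
  by (simp add: AutoGroup_carrier auto_def Bij_def)

lemma AutoGroup_bij: "f \<in> carrier (AutoGroup G) \<Longrightarrow> bij_betw f (carrier G) (carrier G)"
  by (simp add: AutoGroup_carrier auto_def Bij_def)

lemma AutoGroup_closed: "f \<in> carrier (AutoGroup G) \<Longrightarrow> x \<in> carrier G \<Longrightarrow> f x \<in> carrier G"
  by (rule hom_in_carrier[OF AutoGroup_hom])

lemma AutoGroup_subset_PiE: "carrier (AutoGroup G) \<subseteq> (\<Pi>\<^sub>E x\<in>carrier G. carrier G)"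
  using AutoGroup_extensional AutoGroup_closed by (auto simp: PiE_iff extensional_def)

lemma finite_AutoGroup: "finite (carrier G) \<Longrightarrow> finite (carrier (AutoGroup G))"
  by (rule finite_subset[OF AutoGroup_subset_PiE finite_PiE])

context group
begin

lemma AutoGroup_group_hom: "f \<in> carrier (AutoGroup G) \<Longrightarrow> group_hom G G f"
  by (simp add: group_hom_def group_hom_axioms_def is_group AutoGroup_hom)

lemma inn_apply: "x \<in> carrier G \<Longrightarrow> inn G g x = g \<otimes> x \<otimes> inv g"
  by (simp add: inn_def)

lemma inn_closed [simp]: "g \<in> carrier G \<Longrightarrow> x \<in> carrier G \<Longrightarrow> inn G g x \<in> carrier G"
  by (simp add: inn_apply)

lemma inv_mult_cancel_left: "x \<in> carrier G \<Longrightarrow> y \<in> carrier G \<Longrightarrow> inv x \<otimes> (x \<otimes> y) = y"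
  by (simp add: m_assoc[symmetric])

lemma mult_inv_cancel_left: "x \<in> carrier G \<Longrightarrow> y \<in> carrier G \<Longrightarrow> x \<otimes> (inv x \<otimes> y) = y"
  by (simp add: m_assoc[symmetric])

lemma inn_in_AutoGroup:
  assumes g: "g \<in> carrier G"
  shows "inn G g \<in> carrier (AutoGroup G)"
proof (rule AutoGroup_memI)
  show "inn G g \<in> hom G G"
    using g by (intro homI) (simp_all add: inn_apply m_assoc inv_mult_cancel_left)
  have "inn G g (inn G (inv g) y) = y" "inn G (inv g) (inn G g y) = y" if "y \<in> carrier G" for y
    using g that by (simp_all add: inn_apply m_assoc inv_mult_cancel_left mult_inv_cancel_left)
  moreover have "inn G g \<in> carrier G \<rightarrow> carrier G" "inn G (inv g) \<in> carrier G \<rightarrow> carrier G"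
    using g by (auto simp: inn_apply)
  ultimately show "bij_betw (inn G g) (carrier G) (carrier G)"
    by (intro bij_betwI[where g = "inn G (inv g)"]) auto
  show "inn G g \<in> extensional (carrier G)" by (simp add: inn_def)
qed

lemma inn_mult:
  assumes "g \<in> carrier G" "h \<in> carrier G"
  shows "inn G g \<otimes>\<^bsub>AutoGroup G\<^esub> inn G h = inn G (g \<otimes> h)"
  unfolding AutoGroup_mult[OF inn_in_AutoGroup inn_in_AutoGroup, OF assms]
  using assms by (intro ext) (simp add: compose_def inn_def inv_mult_group m_assoc)

lemma inn_one: "inn G \<one> = \<one>\<^bsub>AutoGroup G\<^esub>"
  unfolding inn_def AutoGroup_one by (intro restrict_ext) simp

lemma inn_inv:
  assumes "g \<in> carrier G"
  shows "inv\<^bsub>AutoGroup G\<^esub> (inn G g) = inn G (inv g)"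
  using assms inn_mult[of "inv g" g]
  by (intro group.inv_equality[OF AutoGroup]) (simp_all add: inn_in_AutoGroup inn_one)

lemma AutoGroup_mult_inn:
  assumes c: "c \<in> carrier (AutoGroup G)" and h: "h \<in> carrier G"
  shows "c \<otimes>\<^bsub>AutoGroup G\<^esub> inn G h = inn G (c h) \<otimes>\<^bsub>AutoGroup G\<^esub> c"
proof -
  interpret c: group_hom G G c by (rule AutoGroup_group_hom[OF c])
  have "c (inn G h x) = inn G (c h) (c x)" if "x \<in> carrier G" for x
    using that h by (simp add: inn_apply)
  then show ?thesis
    using c h AutoGroup_closed[OF c h] AutoGroup_closed[OF c]
    unfolding AutoGroup_mult[OF c inn_in_AutoGroup[OF h]]
      AutoGroup_mult[OF inn_in_AutoGroup[OF AutoGroup_closed[OF c h]] c]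
    by (intro ext) (simp add: compose_def)
qed

lemma p_element_inn:
  "g \<in> carrier G \<Longrightarrow> Factorial_Ring.prime p \<Longrightarrow> p_element G p x \<Longrightarrow> p_element G p (inn G g x)"
  by (rule p_element_hom_image[OF AutoGroup_group_hom[OF inn_in_AutoGroup]])

lemma AutoGroup_apply_eq_one_iff:
  assumes "f \<in> carrier (AutoGroup G)" "x \<in> carrier G"
  shows "f x = \<one> \<longleftrightarrow> x = \<one>"
proof -
  have "f \<one> = \<one>" by (rule group_hom.hom_one[OF AutoGroup_group_hom[OF assms(1)]])
  then show ?thesis
    using inj_on_eq_iff[OF bij_betw_imp_inj_on[OF AutoGroup_bij[OF assms(1)]], of x \<one>] assms(2)
    by simp
qed

lemma commute_mult:
  assumes "a \<in> carrier G" "u \<in> carrier G" "w \<in> carrier G" "a \<otimes> u = u \<otimes> a" "a \<otimes> w = w \<otimes> a"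
  shows "a \<otimes> (u \<otimes> w) = (u \<otimes> w) \<otimes> a"
  using assms by (metis m_assoc)

lemma commute_inv:
  assumes "a \<in> carrier G" "u \<in> carrier G" "a \<otimes> u = u \<otimes> a"
  shows "a \<otimes> inv u = inv u \<otimes> a"
proof -
  have "inv u \<otimes> a = inv u \<otimes> (a \<otimes> u) \<otimes> inv u" using assms(1,2) by (simp add: m_assoc)
  also have "\<dots> = inv u \<otimes> (u \<otimes> a) \<otimes> inv u" using assms(3) by simp
  also have "\<dots> = a \<otimes> inv u" using assms(1,2) by (simp add: m_assoc inv_mult_cancel_left)
  finally show ?thesis by simp
qed

end

text \<open>A conjugate of \<open>\<beta> = inn G b \<otimes> c\<close> by \<open>inn G g\<close> is again of the form \<open>inn G g' \<otimes> c\<close>,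
  namely with \<open>g' = g \<otimes> b \<otimes> c (inv g)\<close>.\<close>
lemma (in group) card_S_class_le_card_coset_p_elements:
  assumes fin: "finite (carrier G)" and p: "Factorial_Ring.prime p"
    and c: "c \<in> carrier (AutoGroup G)" and \<beta>: "\<beta> \<in> Inn G #>\<^bsub>AutoGroup G\<^esub> c"
    and \<beta>_p: "p_element (AutoGroup G) p \<beta>"
  shows "card (S_class G \<beta>) \<le> card {g \<in> carrier G. p_element (AutoGroup G) p (inn G g \<otimes>\<^bsub>AutoGroup G\<^esub> c)}"
    (is "_ \<le> card ?C")
proof -
  interpret A: group "AutoGroup G" by (rule AutoGroup)
  obtain b where b: "b \<in> carrier G" "\<beta> = inn G b \<otimes>\<^bsub>AutoGroup G\<^esub> c"
    using \<beta> by (auto simp: r_coset_def Inn_def)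
  have "S_class G \<beta> \<subseteq> (\<lambda>g. inn G g \<otimes>\<^bsub>AutoGroup G\<^esub> c) ` ?C"
  proof
    fix y assume "y \<in> S_class G \<beta>"
    then obtain g where g: "g \<in> carrier G"
      and y: "y = inn G g \<otimes>\<^bsub>AutoGroup G\<^esub> \<beta> \<otimes>\<^bsub>AutoGroup G\<^esub> inv\<^bsub>AutoGroup G\<^esub> inn G g"
      by (auto simp: S_class_def)
    have cg: "c (inv g) \<in> carrier G" using AutoGroup_closed[OF c] g by simp
    have "y = inn G g \<otimes>\<^bsub>AutoGroup G\<^esub> inn G b \<otimes>\<^bsub>AutoGroup G\<^esub> (c \<otimes>\<^bsub>AutoGroup G\<^esub> inn G (inv g))"
      using g b c by (simp add: y inn_inv inn_in_AutoGroup A.m_assoc)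
    also have "\<dots> = inn G g \<otimes>\<^bsub>AutoGroup G\<^esub> inn G b \<otimes>\<^bsub>AutoGroup G\<^esub> inn G (c (inv g)) \<otimes>\<^bsub>AutoGroup G\<^esub> c"
      using g b c cg by (simp add: AutoGroup_mult_inn[OF c] inn_in_AutoGroup A.m_assoc)
    also have "\<dots> = inn G (g \<otimes> b \<otimes> c (inv g)) \<otimes>\<^bsub>AutoGroup G\<^esub> c"
      using g b cg by (simp add: inn_mult)
    finally have y': "y = inn G (g \<otimes> b \<otimes> c (inv g)) \<otimes>\<^bsub>AutoGroup G\<^esub> c" .
    have "\<beta> \<in> carrier (AutoGroup G)" using \<beta>_p by (simp add: p_element_def)
    then have "p_element (AutoGroup G) p y"
      using A.p_element_inn[OF inn_in_AutoGroup[OF g] p \<beta>_p] by (simp add: A.inn_apply y)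
    with y' g b cg show "y \<in> (\<lambda>g. inn G g \<otimes>\<^bsub>AutoGroup G\<^esub> c) ` ?C"
      by (intro image_eqI[where x = "g \<otimes> b \<otimes> c (inv g)"]) simp_all
  qed
  then have "card (S_class G \<beta>) \<le> card ((\<lambda>g. inn G g \<otimes>\<^bsub>AutoGroup G\<^esub> c) ` ?C)"
    using fin by (intro card_mono) auto
  also have "\<dots> \<le> card ?C" using fin by (intro card_image_le) auto
  finally show ?thesis .
qed

lemma (in group) card_coset_p_elements_ge:
  assumes fin: "finite (carrier G)" and p: "Factorial_Ring.prime p"
    and hyp: "\<forall>\<beta>\<in>carrier (AutoGroup G). \<exists>\<gamma>\<in>Inn G #>\<^bsub>AutoGroup G\<^esub> \<beta>.
      p_element (AutoGroup G) p \<gamma> \<and> M \<le> card (S_class G \<gamma>)"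
    and c: "c \<in> carrier (AutoGroup G)"
  shows "M \<le> card {g \<in> carrier G. p_element (AutoGroup G) p (inn G g \<otimes>\<^bsub>AutoGroup G\<^esub> c)}"
proof -
  from hyp c obtain \<gamma> where "\<gamma> \<in> Inn G #>\<^bsub>AutoGroup G\<^esub> c" "p_element (AutoGroup G) p \<gamma>"
    and "M \<le> card (S_class G \<gamma>)"
    by (elim ballE bexE conjE) auto
  with card_S_class_le_card_coset_p_elements[OF fin p c] show ?thesis by (meson le_trans)
qed

section \<open>Nonabelian simple groups\<close>

context group
begin

definition centralizer_core :: "'a \<Rightarrow> 'a set" where
  "centralizer_core a = {z \<in> carrier G. \<forall>g\<in>carrier G. a \<otimes> inn G g z = inn G g z \<otimes> a}"

lemma centralizer_core_normal:
  assumes a: "a \<in> carrier G"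
  shows "centralizer_core a \<lhd> G"
proof -
  have inn_hom: "group_hom G G (inn G g)" if "g \<in> carrier G" for g
    by (rule AutoGroup_group_hom[OF inn_in_AutoGroup[OF that]])
  have "subgroup (centralizer_core a) G"
  proof (rule subgroupI)
    show "centralizer_core a \<subseteq> carrier G" by (auto simp: centralizer_core_def)
    show "centralizer_core a \<noteq> {}"
      using a by (auto simp: centralizer_core_def inn_apply intro!: exI[of _ \<one>])
  next
    fix z assume z: "z \<in> centralizer_core a"
    show "inv z \<in> centralizer_core a" unfolding centralizer_core_def
    proof (intro CollectI conjI ballI)
      show "inv z \<in> carrier G" using z by (simp add: centralizer_core_def)
      fix g assume g: "g \<in> carrier G"
      have "inn G g z \<in> carrier G" "a \<otimes> inn G g z = inn G g z \<otimes> a"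
        using z g by (auto simp: centralizer_core_def inn_apply)
      then show "a \<otimes> inn G g (inv z) = inn G g (inv z) \<otimes> a"
        using commute_inv[OF a] group_hom.hom_inv[OF inn_hom[OF g]] z
        by (simp add: centralizer_core_def)
    qed
  next
    fix z w assume z: "z \<in> centralizer_core a" and w: "w \<in> centralizer_core a"
    show "z \<otimes> w \<in> centralizer_core a" unfolding centralizer_core_def
    proof (intro CollectI conjI ballI)
      show "z \<otimes> w \<in> carrier G" using z w by (simp add: centralizer_core_def)
      fix g assume g: "g \<in> carrier G"
      have "inn G g z \<in> carrier G" "a \<otimes> inn G g z = inn G g z \<otimes> a"
        "inn G g w \<in> carrier G" "a \<otimes> inn G g w = inn G g w \<otimes> a"
        using z w g by (auto simp: centralizer_core_def inn_apply)
      then show "a \<otimes> inn G g (z \<otimes> w) = inn G g (z \<otimes> w) \<otimes> a"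
        using commute_mult[OF a] group_hom.hom_mult[OF inn_hom[OF g]] z w
        by (simp add: centralizer_core_def)
    qed
  qed
  moreover have "inn G g (inn G x h) = inn G (g \<otimes> x) h" if "g \<in> carrier G" "x \<in> carrier G" "h \<in> carrier G" for g x h
    using that by (simp add: inn_apply m_assoc inv_mult_group)
  ultimately show ?thesis
    unfolding normal_inv_iff by (auto simp: centralizer_core_def inn_apply[symmetric])
qed

lemma centralizer_core_commute:
  assumes "z \<in> centralizer_core a"
  shows "a \<otimes> z = z \<otimes> a"
proof -
  have "z \<in> carrier G" "a \<otimes> inn G \<one> z = inn G \<one> z \<otimes> a"
    using assms by (auto simp: centralizer_core_def)
  then show ?thesis by (simp add: inn_apply)
qed

lemma centralizer_core_AutoGroup_iff:
  assumes \<alpha>: "\<alpha> \<in> carrier (AutoGroup G)" and a: "a \<in> carrier G" and z: "z \<in> carrier G"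
  shows "\<alpha> z \<in> centralizer_core (\<alpha> a) \<longleftrightarrow> z \<in> centralizer_core a"
proof -
  interpret \<alpha>: group_hom G G \<alpha> by (rule AutoGroup_group_hom[OF \<alpha>])
  have bij: "bij_betw \<alpha> (carrier G) (carrier G)" by (rule AutoGroup_bij[OF \<alpha>])
  have image: "\<alpha> (a \<otimes> inn G g z) = \<alpha> a \<otimes> inn G (\<alpha> g) (\<alpha> z)"
    "\<alpha> (inn G g z \<otimes> a) = inn G (\<alpha> g) (\<alpha> z) \<otimes> \<alpha> a" if "g \<in> carrier G" for g
    using that a z by (simp_all add: inn_apply)
  have pointwise: "\<alpha> a \<otimes> inn G (\<alpha> g) (\<alpha> z) = inn G (\<alpha> g) (\<alpha> z) \<otimes> \<alpha> a \<longleftrightarrow>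
      a \<otimes> inn G g z = inn G g z \<otimes> a" if g: "g \<in> carrier G" for g
  proof -
    have "\<alpha> a \<otimes> inn G (\<alpha> g) (\<alpha> z) = inn G (\<alpha> g) (\<alpha> z) \<otimes> \<alpha> a \<longleftrightarrow>
        \<alpha> (a \<otimes> inn G g z) = \<alpha> (inn G g z \<otimes> a)"
      by (simp only: image[OF g])
    also have "\<dots> \<longleftrightarrow> a \<otimes> inn G g z = inn G g z \<otimes> a"
      using a z g by (intro inj_on_eq_iff[OF bij_betw_imp_inj_on[OF bij]]) simp_all
    finally show ?thesis .
  qed
  have "(\<forall>g'\<in>carrier G. \<alpha> a \<otimes> inn G g' (\<alpha> z) = inn G g' (\<alpha> z) \<otimes> \<alpha> a) \<longleftrightarrow>
        (\<forall>g\<in>carrier G. \<alpha> a \<otimes> inn G (\<alpha> g) (\<alpha> z) = inn G (\<alpha> g) (\<alpha> z) \<otimes> \<alpha> a)"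
    by (subst bij_betw_imp_surj_on[OF bij, symmetric]) simp
  also have "\<dots> \<longleftrightarrow> (\<forall>g\<in>carrier G. a \<otimes> inn G g z = inn G g z \<otimes> a)"
    using pointwise by simp
  finally show ?thesis using z by (simp add: centralizer_core_def)
qed

end

lemma (in simple_group) centralizer_core_eq_carrier:
  assumes "a \<in> carrier G" "z \<in> centralizer_core a" "z \<noteq> \<one>"
  shows "centralizer_core a = carrier G"
  using no_real_normal_subgroup[OF centralizer_core_normal[OF assms(1)]] assms(2,3) by blast

locale nonabelian_simple_group = simple_group +
  assumes not_comm_group: "\<not> comm_group G"
begin

lemma central_eq_one:
  assumes a: "a \<in> carrier G" and central: "\<And>w. w \<in> carrier G \<Longrightarrow> a \<otimes> w = w \<otimes> a"
  shows "a = \<one>"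
proof (rule ccontr)
  assume "a \<noteq> \<one>"
  have "x \<otimes> y = y \<otimes> x" if x: "x \<in> carrier G" and y: "y \<in> carrier G" for x y
  proof -
    have "inn G g a = a" if "g \<in> carrier G" for g
      using that a by (simp add: inn_apply central[OF that, symmetric] m_assoc)
    then have "a \<in> centralizer_core x" using a central[OF x] by (simp add: centralizer_core_def)
    then have "y \<in> centralizer_core x"
      using centralizer_core_eq_carrier[OF x _ \<open>a \<noteq> \<one>\<close>] y by blast
    then show ?thesis by (rule centralizer_core_commute)
  qed
  then have "comm_group G" by (intro group_comm_groupI)
  with not_comm_group show False ..
qed

lemma centralizer_core_trivial:
  assumes a: "a \<in> carrier G" "a \<noteq> \<one>"
  shows "centralizer_core a = {\<one>}"
proof -
  have "z = \<one>" if z: "z \<in> centralizer_core a" for z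
  proof (rule ccontr)
    assume "z \<noteq> \<one>"
    then have "w \<in> centralizer_core a" if "w \<in> carrier G" for w
      using centralizer_core_eq_carrier[OF a(1) z] that by blast
    then have "a \<otimes> w = w \<otimes> a" if "w \<in> carrier G" for w
      using that centralizer_core_commute by blast
    then show False using central_eq_one[OF a(1)] a(2) by blast
  qed
  moreover have "\<one> \<in> centralizer_core a" using a by (simp add: centralizer_core_def inn_apply)
  ultimately show ?thesis by blast
qed

lemma inj_on_inn: "inj_on (inn G) (carrier G)"
proof (rule inj_onI)
  fix a b assume a: "a \<in> carrier G" and b: "b \<in> carrier G" and eq: "inn G a = inn G b"
  have "(inv b \<otimes> a) \<otimes> z = z \<otimes> (inv b \<otimes> a)" if z: "z \<in> carrier G" for z
  proof -
    have "(inv b \<otimes> a) \<otimes> z = inv b \<otimes> inn G a z \<otimes> a" using z a b by (simp add: inn_apply m_assoc)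
    also have "\<dots> = z \<otimes> (inv b \<otimes> a)" using z a b eq by (simp add: inn_apply m_assoc inv_mult_cancel_left)
    finally show ?thesis .
  qed
  then have "inv b \<otimes> a = \<one>" using central_eq_one a b by simp
  then show "a = b" using a b by (metis inv_equality inv_inv l_inv_ex)
qed

end

section \<open>Orbits of a self-map and products along them\<close>

lemma funpow_in_set: "\<sigma> ` I \<subseteq> I \<Longrightarrow> j \<in> I \<Longrightarrow> (\<sigma> ^^ k) j \<in> I"
  by (induct k) auto

lemma funpow_mult_fixed: "(\<sigma> ^^ m) r = r \<Longrightarrow> (\<sigma> ^^ (k * m)) r = r"
  using funpow_mod_eq[where f = \<sigma> and n = m and x = r and m = "k * m"] by simp

lemma funpow_less_least_power_neq:
  assumes "0 < k" "k < least_power \<sigma> r"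
  shows "(\<sigma> ^^ k) r \<noteq> r"
  using assms least_power_le[where f = \<sigma> and n = k and x = r] by linarith

definition orbit_reps :: "nat set \<Rightarrow> (nat \<Rightarrow> nat) \<Rightarrow> nat set" where
  "orbit_reps I \<sigma> = {r \<in> I. \<forall>k. r \<le> (\<sigma> ^^ k) r}"

lemma orbit_reps_exists:
  assumes \<sigma>: "\<sigma> ` I \<subseteq> I" and j: "j \<in> I" and Q: "0 < Q" "(\<sigma> ^^ Q) j = j"
  obtains r k where "r \<in> orbit_reps I \<sigma>" "j = (\<sigma> ^^ k) r"
proof -
  define orb where "orb = (\<lambda>k. (\<sigma> ^^ k) j) ` {..<Q}"
  have "finite orb" "orb \<noteq> {}" using Q by (auto simp: orb_def)
  define r where "r = Min orb"
  have "r \<in> orb" unfolding r_def using \<open>finite orb\<close> \<open>orb \<noteq> {}\<close> by (rule Min_in)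
  then obtain k0 where k0: "k0 < Q" "r = (\<sigma> ^^ k0) j" by (auto simp: orb_def)
  have "r \<le> (\<sigma> ^^ k) r" for k
  proof -
    have "(\<sigma> ^^ k) r = (\<sigma> ^^ ((k + k0) mod Q)) j"
      using k0(2) funpow_mod_eq[OF Q(2)] by (simp add: funpow_add)
    then have "(\<sigma> ^^ k) r \<in> orb" using Q by (auto simp: orb_def)
    then show ?thesis unfolding r_def using \<open>finite orb\<close> by simp
  qed
  then have "r \<in> orbit_reps I \<sigma>" using k0 funpow_in_set[OF \<sigma> j] by (simp add: orbit_reps_def)
  moreover have "j = (\<sigma> ^^ (Q - k0)) r"
    using k0 Q(2) by (simp add: funpow_add[symmetric, THEN fun_cong, simplified])
  ultimately show thesis by (rule that)
qed

lemma orbit_reps_unique: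
  assumes r: "r \<in> orbit_reps I \<sigma>" and Q: "0 < Q" "(\<sigma> ^^ Q) r = r"
    and k: "0 < k" "k < least_power \<sigma> r"
  shows "(\<sigma> ^^ k) r \<notin> orbit_reps I \<sigma>"
proof
  assume k_rep: "(\<sigma> ^^ k) r \<in> orbit_reps I \<sigma>"
  have "(\<sigma> ^^ k) r \<le> (\<sigma> ^^ (least_power \<sigma> r - k)) ((\<sigma> ^^ k) r)"
    using k_rep by (simp add: orbit_reps_def)
  also have "\<dots> = (\<sigma> ^^ least_power \<sigma> r) r"
    using k by (simp add: funpow_add[symmetric, THEN fun_cong, simplified])
  also have "\<dots> = r" using least_powerI(1)[OF Q(2,1)] .
  finally have "(\<sigma> ^^ k) r = r" using r by (simp add: orbit_reps_def le_antisym)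
  with funpow_less_least_power_neq[OF k] show False ..
qed

primrec orbit_prod :: "('g, 'b) monoid_scheme \<Rightarrow> (nat \<Rightarrow> 'g) \<Rightarrow> (nat \<Rightarrow> nat) \<Rightarrow> nat \<Rightarrow> nat \<Rightarrow> 'g"
  where
    "orbit_prod G \<psi> \<sigma> 0 j = \<one>\<^bsub>G\<^esub>"
  | "orbit_prod G \<psi> \<sigma> (Suc k) j = orbit_prod G \<psi> \<sigma> k j \<otimes>\<^bsub>G\<^esub> \<psi> ((\<sigma> ^^ k) j)"

lemma orbit_prod_cong:
  "(\<And>i. i < k \<Longrightarrow> \<psi> ((\<sigma> ^^ i) j) = \<psi>' ((\<sigma> ^^ i) j)) \<Longrightarrow>
   orbit_prod G \<psi> \<sigma> k j = orbit_prod G \<psi>' \<sigma> k j"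
  by (induct k) auto

context monoid
begin

lemma orbit_prod_closed:
  assumes "\<sigma> ` I \<subseteq> I" "\<psi> \<in> I \<rightarrow> carrier G" "j \<in> I"
  shows "orbit_prod G \<psi> \<sigma> k j \<in> carrier G"
  using assms funpow_in_set[OF assms(1,3)] by (induct k) auto

lemma orbit_prod_add:
  assumes \<sigma>: "\<sigma> ` I \<subseteq> I" and \<psi>: "\<psi> \<in> I \<rightarrow> carrier G" and j: "j \<in> I"
  shows "orbit_prod G \<psi> \<sigma> (a + b) j = orbit_prod G \<psi> \<sigma> a j \<otimes> orbit_prod G \<psi> \<sigma> b ((\<sigma> ^^ a) j)"
proof (induct b)
  case 0
  show ?case using orbit_prod_closed[OF \<sigma> \<psi> j] by simp
next
  case (Suc b)
  have j': "(\<sigma> ^^ a) j \<in> I" by (rule funpow_in_set[OF \<sigma> j])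
  have "(\<sigma> ^^ (a + b)) j = (\<sigma> ^^ b) ((\<sigma> ^^ a) j)"
    by (simp only: add.commute[of a b] funpow_add comp_apply)
  moreover have "\<psi> ((\<sigma> ^^ b) ((\<sigma> ^^ a) j)) \<in> carrier G"
    using \<psi> funpow_in_set[OF \<sigma> j'] by blast
  ultimately show ?case
    using Suc orbit_prod_closed[OF \<sigma> \<psi> j] orbit_prod_closed[OF \<sigma> \<psi> j'] by (simp add: m_assoc)
qed

lemma orbit_prod_period_power:
  assumes \<sigma>: "\<sigma> ` I \<subseteq> I" and \<psi>: "\<psi> \<in> I \<rightarrow> carrier G" and r: "r \<in> I"
    and period: "(\<sigma> ^^ m) r = r"
  shows "orbit_prod G \<psi> \<sigma> (k * m) r = orbit_prod G \<psi> \<sigma> m r [^] k"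
proof (induct k)
  case (Suc k)
  have "orbit_prod G \<psi> \<sigma> (k * m + m) r = orbit_prod G \<psi> \<sigma> (k * m) r \<otimes> orbit_prod G \<psi> \<sigma> m r"
    using orbit_prod_add[OF \<sigma> \<psi> r] funpow_mult_fixed[OF period] by simp
  with Suc show ?case by (simp add: add.commute)
qed simp

end

text \<open>The products over a period at \<open>r\<close> and at \<open>(\<sigma> ^^ k) r\<close> are conjugate by the
  product of the first \<open>k\<close> factors.\<close>
lemma (in group) orbit_prod_period_along_orbit:
  assumes \<sigma>: "\<sigma> ` I \<subseteq> I" and \<psi>: "\<psi> \<in> I \<rightarrow> carrier G" and r: "r \<in> I"
    and period: "(\<sigma> ^^ q) r = r" and one: "orbit_prod G \<psi> \<sigma> q r = \<one>"
  shows "orbit_prod G \<psi> \<sigma> q ((\<sigma> ^^ k) r) = \<one>"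
proof -
  have "orbit_prod G \<psi> \<sigma> k r \<otimes> orbit_prod G \<psi> \<sigma> q ((\<sigma> ^^ k) r) = orbit_prod G \<psi> \<sigma> (k + q) r"
    by (rule orbit_prod_add[OF \<sigma> \<psi> r, symmetric])
  also have "\<dots> = orbit_prod G \<psi> \<sigma> q r \<otimes> orbit_prod G \<psi> \<sigma> k ((\<sigma> ^^ q) r)"
    by (subst add.commute) (rule orbit_prod_add[OF \<sigma> \<psi> r])
  also have "\<dots> = orbit_prod G \<psi> \<sigma> k r"
    using one period orbit_prod_closed[OF \<sigma> \<psi> r] by simp
  finally show ?thesis
    using l_cancel_one[OF orbit_prod_closed[OF \<sigma> \<psi> r] orbit_prod_closed[OF \<sigma> \<psi> funpow_in_set[OF \<sigma> r]]]
    by simp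
qed

lemma (in group) orbit_prod_mult_period_eq_one:
  assumes \<sigma>: "\<sigma> ` I \<subseteq> I" and \<psi>: "\<psi> \<in> I \<rightarrow> carrier G" and r: "r \<in> I"
    and Q: "0 < Q" "(\<sigma> ^^ Q) r = r"
    and e: "orbit_prod G \<psi> \<sigma> (least_power \<sigma> r) r [^] (e :: nat) = \<one>"
  shows "orbit_prod G \<psi> \<sigma> (e * Q) r = \<one>"
proof -
  obtain d where d: "Q = least_power \<sigma> r * d"
    using least_power_minimal[OF Q(2)] by (auto elim: dvdE)
  have "orbit_prod G \<psi> \<sigma> (e * Q) r = orbit_prod G \<psi> \<sigma> (least_power \<sigma> r) r [^] (e * d)"
    using orbit_prod_period_power[OF \<sigma> \<psi> r least_powerI(1)[OF Q(2,1)], of "e * d"]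
    by (simp add: d ac_simps)
  also have "\<dots> = \<one>" using e orbit_prod_closed[OF \<sigma> \<psi> r] by (simp add: nat_pow_pow[symmetric])
  finally show ?thesis .
qed

section \<open>Counting functions with constrained values\<close>

lemma card_Sigma_PiE_ge:
  assumes "finite F" "finite T"
    and "\<And>f r. f \<in> F \<Longrightarrow> r \<in> T \<Longrightarrow> finite (C f r)"
    and "\<And>f r. f \<in> F \<Longrightarrow> r \<in> T \<Longrightarrow> M \<le> card (C f r)"
  shows "card F * M ^ card T \<le> card (SIGMA f:F. \<Pi>\<^sub>E r\<in>T. C f r)"
proof -
  have "M ^ card T \<le> (\<Prod>r\<in>T. card (C f r))" if "f \<in> F" for f
    using prod_mono[of T "\<lambda>_. M" "\<lambda>r. card (C f r)"] assms(4)[OF that] by simp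
  then have "card F * M ^ card T \<le> (\<Sum>f\<in>F. \<Prod>r\<in>T. card (C f r))"
    using sum_bounded_below[of F "M ^ card T"] by simp
  also have "\<dots> = (\<Sum>f\<in>F. card (\<Pi>\<^sub>E r\<in>T. C f r))"
    using assms(2) by (simp add: card_PiE)
  also have "\<dots> = card (SIGMA f:F. \<Pi>\<^sub>E r\<in>T. C f r)"
    using assms(1-3) by (intro card_SigmaI[symmetric]) (auto intro: finite_PiE)
  finally show ?thesis .
qed

lemma card_PiE_constrained_ge:
  fixes I :: "'i set" and V :: "'v set"
  assumes I: "finite I" and T: "T \<subseteq> I" and V: "finite V" "M \<le> card V"
    and C: "\<And>f r. r \<in> T \<Longrightarrow> C f r \<subseteq> V"
    and C_card: "\<And>f r. f \<in> (\<Pi>\<^sub>E j\<in>I - T. V) \<Longrightarrow> r \<in> T \<Longrightarrow> M \<le> card (C f r)"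
  shows "M ^ card I \<le> card {y \<in> (\<Pi>\<^sub>E j\<in>I. V). \<forall>r\<in>T. y r \<in> C (restrict y (I - T)) r}"
    (is "_ \<le> card ?Y")
proof -
  define F where "F = (\<Pi>\<^sub>E j\<in>I - T. V)"
  define Sg where "Sg = (SIGMA f:F. \<Pi>\<^sub>E r\<in>T. C f r)"
  define merge :: "('i \<Rightarrow> 'v) \<times> ('i \<Rightarrow> 'v) \<Rightarrow> 'i \<Rightarrow> 'v"
    where "merge = (\<lambda>(f, g). \<lambda>j\<in>I. if j \<in> T then g j else f j)"
  have finT: "finite T" using finite_subset[OF T I] .
  have "inj_on merge Sg"
  proof (rule inj_onI)
    fix u v assume "u \<in> Sg" "v \<in> Sg" and eq: "merge u = merge v"
    then obtain f g f' g' where uv: "u = (f, g)" "v = (f', g')" "f \<in> F" "f' \<in> F"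
      "g \<in> (\<Pi>\<^sub>E r\<in>T. C f r)" "g' \<in> (\<Pi>\<^sub>E r\<in>T. C f' r)" by (auto simp: Sg_def)
    have pointwise: "(if j \<in> T then g j else f j) = (if j \<in> T then g' j else f' j)" if "j \<in> I" for j
      using fun_cong[OF eq, of j] that by (simp add: merge_def uv(1,2))
    have "f = f'" using uv(3,4) unfolding F_def by (rule PiE_ext) (metis DiffE pointwise)
    moreover have "g = g'"
    proof (rule extensionalityI)
      show "g \<in> extensional T" "g' \<in> extensional T" using uv(5,6) by (simp_all add: PiE_iff)
    qed (metis pointwise T subsetD)
    ultimately show "u = v" using uv(1,2) by simp
  qed
  moreover have "merge ` Sg \<subseteq> ?Y"
  proof
    fix y assume "y \<in> merge ` Sg"
    then obtain f g where fg: "f \<in> F" "g \<in> (\<Pi>\<^sub>E r\<in>T. C f r)" and y: "y = merge (f, g)"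
      by (auto simp: Sg_def)
    have "restrict y (I - T) = f"
      using fg(1) by (auto simp: y merge_def F_def PiE_iff extensional_def intro!: ext)
    moreover have "g r \<in> V" if "r \<in> T" for r using fg(2) C that by auto
    ultimately show "y \<in> ?Y" using fg T by (auto simp: y merge_def F_def PiE_iff)
  qed
  moreover have "finite ?Y" by (rule finite_subset[OF _ finite_PiE[OF I]]) (use V in auto)
  ultimately have "card Sg \<le> card ?Y" by (rule card_inj_on_le)
  have "M ^ card I = M ^ card (I - T) * M ^ card T"
    using T finT card_mono[OF I T] by (simp add: card_Diff_subset power_add[symmetric])
  also have "\<dots> \<le> card F * M ^ card T"
    using I V by (simp add: F_def card_PiE power_mono)
  also have "\<dots> \<le> card Sg"
    unfolding Sg_def using I V C C_card finT
    by (intro card_Sigma_PiE_ge) (auto simp: F_def finite_PiE intro: finite_subset)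
  also have "\<dots> \<le> card ?Y" by fact
  finally show ?thesis .
qed

section \<open>Automorphisms of a power of a nonabelian simple group\<close>

locale power_of_nonabelian_simple = nonabelian_simple_group S for S :: "'a monoid" (structure) +
  fixes t :: nat
  assumes finite_carrier: "finite (carrier S)"
begin

abbreviation "I \<equiv> {..<t}"
abbreviation "N \<equiv> power_group S t"
abbreviation "AS \<equiv> AutoGroup S"
abbreviation "AN \<equiv> AutoGroup N"

sublocale N: group N
  unfolding power_group_def by (rule product_group) (rule is_group)

sublocale AS: group AS by (rule AutoGroup)

sublocale AN: group AN by (rule N.AutoGroup)

lemma carrier_N: "carrier N = (\<Pi>\<^sub>E i\<in>I. carrier S)"
  by (simp add: power_group_def)

lemma mult_N_apply: "i \<in> I \<Longrightarrow> (x \<otimes>\<^bsub>N\<^esub> y) i = x i \<otimes> y i"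
  by (simp add: power_group_def)

lemma inv_N_apply: "x \<in> carrier N \<Longrightarrow> i \<in> I \<Longrightarrow> (inv\<^bsub>N\<^esub> x) i = inv (x i)"
  unfolding power_group_def by (simp add: is_group)

lemma one_N: "\<one>\<^bsub>N\<^esub> = (\<lambda>i\<in>I. \<one>)"
  by (simp add: power_group_def)

lemma N_apply_closed: "x \<in> carrier N \<Longrightarrow> i \<in> I \<Longrightarrow> x i \<in> carrier S"
  by (auto simp: carrier_N)

lemma N_eqI: "x \<in> carrier N \<Longrightarrow> y \<in> carrier N \<Longrightarrow> (\<And>i. i \<in> I \<Longrightarrow> x i = y i) \<Longrightarrow> x = y"
  unfolding carrier_N by (rule PiE_ext)

lemma finite_carrier_N: "finite (carrier N)"
  using finite_carrier by (simp add: carrier_N finite_PiE)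

lemma inn_N_apply:
  "n \<in> carrier N \<Longrightarrow> x \<in> carrier N \<Longrightarrow> i \<in> I \<Longrightarrow> inn N n x i = inn S (n i) (x i)"
  by (simp add: N.inn_apply inn_apply mult_N_apply inv_N_apply N_apply_closed)

definition single :: "nat \<Rightarrow> 'a \<Rightarrow> nat \<Rightarrow> 'a" where
  "single i s = (\<lambda>j\<in>I. if j = i then s else \<one>)"

lemma single_closed: "s \<in> carrier S \<Longrightarrow> single i s \<in> carrier N"
  by (auto simp: single_def carrier_N)

lemma single_apply: "j \<in> I \<Longrightarrow> single i s j = (if j = i then s else \<one>)"
  by (simp add: single_def)

lemma single_one: "single i \<one> = \<one>\<^bsub>N\<^esub>"
  by (simp add: single_def one_N)

lemma single_mult:
  "s \<in> carrier S \<Longrightarrow> s' \<in> carrier S \<Longrightarrow> single i s \<otimes>\<^bsub>N\<^esub> single i s' = single i (s \<otimes> s')"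
  by (rule N_eqI) (auto simp: single_closed mult_N_apply single_apply)

definition supp :: "(nat \<Rightarrow> 'a) \<Rightarrow> nat set" where
  "supp x = {j \<in> I. x j \<noteq> \<one>}"

lemma supp_subset: "supp x \<subseteq> I"
  by (auto simp: supp_def)

lemma supp_single: "i \<in> I \<Longrightarrow> s \<noteq> \<one> \<Longrightarrow> supp (single i s) = {i}"
  by (auto simp: supp_def single_apply split: if_splits)

lemma supp_empty_iff: "x \<in> carrier N \<Longrightarrow> supp x = {} \<longleftrightarrow> x = \<one>\<^bsub>N\<^esub>"
  using N_eqI[OF _ N.one_closed, of x] by (auto simp: supp_def one_N)

text \<open>Disjointness of supports is expressed in group-theoretic terms, hence is preserved
  by automorphisms of \<open>N\<close>.\<close>
lemma centralizer_core_N_iff: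
  assumes x: "x \<in> carrier N" and y: "y \<in> carrier N"
  shows "y \<in> N.centralizer_core x \<longleftrightarrow> supp x \<inter> supp y = {}"
proof
  assume y_core: "y \<in> N.centralizer_core x"
  show "supp x \<inter> supp y = {}"
  proof (rule ccontr)
    assume "supp x \<inter> supp y \<noteq> {}"
    then obtain i where i: "i \<in> I" "x i \<noteq> \<one>" "y i \<noteq> \<one>" by (auto simp: supp_def)
    have "y i \<notin> centralizer_core (x i)"
      using centralizer_core_trivial[OF N_apply_closed[OF x i(1)] i(2)] i(3) by blast
    then obtain g where g: "g \<in> carrier S" "x i \<otimes> inn S g (y i) \<noteq> inn S g (y i) \<otimes> x i"
      using N_apply_closed[OF y i(1)] by (auto simp: centralizer_core_def)
    have "x \<otimes>\<^bsub>N\<^esub> inn N (single i g) y = inn N (single i g) y \<otimes>\<^bsub>N\<^esub> x"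
      using y_core single_closed[OF g(1)] by (simp add: N.centralizer_core_def)
    then have "(x \<otimes>\<^bsub>N\<^esub> inn N (single i g) y) i = (inn N (single i g) y \<otimes>\<^bsub>N\<^esub> x) i" by simp
    with g i(1) show False
      using x y by (simp add: mult_N_apply inn_N_apply single_closed single_apply)
  qed
next
  assume disjoint: "supp x \<inter> supp y = {}"
  have "x \<otimes>\<^bsub>N\<^esub> inn N n y = inn N n y \<otimes>\<^bsub>N\<^esub> x" if n: "n \<in> carrier N" for n
  proof (rule N_eqI)
    fix i assume i: "i \<in> I"
    have "x i = \<one> \<or> y i = \<one>" using disjoint i by (auto simp: supp_def)
    then show "(x \<otimes>\<^bsub>N\<^esub> inn N n y) i = (inn N n y \<otimes>\<^bsub>N\<^esub> x) i"
      using i n x y N_apply_closed[OF n i] N_apply_closed[OF x i] N_apply_closed[OF y i]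
      by (auto simp: mult_N_apply inn_N_apply inn_apply)
  qed (use x y n in simp_all)
  then show "y \<in> N.centralizer_core x" using y by (simp add: N.centralizer_core_def)
qed

lemma disjoint_supp_AutoGroup_iff:
  assumes "\<alpha> \<in> carrier AN" "x \<in> carrier N" "y \<in> carrier N"
  shows "supp (\<alpha> x) \<inter> supp (\<alpha> y) = {} \<longleftrightarrow> supp x \<inter> supp y = {}"
proof -
  have "supp (\<alpha> x) \<inter> supp (\<alpha> y) = {} \<longleftrightarrow> \<alpha> y \<in> N.centralizer_core (\<alpha> x)"
    using assms by (simp add: centralizer_core_N_iff AutoGroup_closed)
  also have "\<dots> \<longleftrightarrow> y \<in> N.centralizer_core x" by (rule N.centralizer_core_AutoGroup_iff[OF assms])
  also have "\<dots> \<longleftrightarrow> supp x \<inter> supp y = {}" by (rule centralizer_core_N_iff[OF assms(2,3)])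
  finally show ?thesis .
qed

lemma AutoGroup_supp_singleton:
  assumes \<alpha>: "\<alpha> \<in> carrier AN" and x: "x \<in> carrier N" and sx: "supp x = {i}"
  obtains j where "supp (\<alpha> x) = {j}"
proof -
  obtain s0 where s0: "s0 \<in> carrier S" "s0 \<noteq> \<one>" using simple_not_triv one_closed by blast
  have "x \<noteq> \<one>\<^bsub>N\<^esub>" using supp_empty_iff[OF x] sx by auto
  then have "\<alpha> x \<noteq> \<one>\<^bsub>N\<^esub>" using N.AutoGroup_apply_eq_one_iff[OF \<alpha> x] by simp
  then have "supp (\<alpha> x) \<noteq> {}" using supp_empty_iff[OF AutoGroup_closed[OF \<alpha> x]] by simp
  then obtain j where j: "j \<in> supp (\<alpha> x)" by blast
  have "k = j" if k: "k \<in> supp (\<alpha> x)" for k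
  proof (rule ccontr)
    assume "k \<noteq> j"
    have jk: "j \<in> I" "k \<in> I" using j k supp_subset by auto
    have surj: "\<alpha> ` carrier N = carrier N" by (rule bij_betw_imp_surj_on[OF AutoGroup_bij[OF \<alpha>]])
    have "single j s0 \<in> \<alpha> ` carrier N" "single k s0 \<in> \<alpha> ` carrier N"
      using single_closed[OF s0(1)] surj by simp_all
    then obtain u v where u: "single j s0 = \<alpha> u" "u \<in> carrier N"
      and v: "single k s0 = \<alpha> v" "v \<in> carrier N" by (elim imageE)
    have disjoint: "supp u \<inter> supp v = {}"
      using disjoint_supp_AutoGroup_iff[OF \<alpha> u(2) v(2)] u(1)[symmetric] v(1)[symmetric] \<open>k \<noteq> j\<close>
      by (simp add: supp_single[OF jk(1) s0(2)] supp_single[OF jk(2) s0(2)])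
    have "supp u \<inter> supp x \<noteq> {}" "supp v \<inter> supp x \<noteq> {}"
      using disjoint_supp_AutoGroup_iff[OF \<alpha> u(2) x] disjoint_supp_AutoGroup_iff[OF \<alpha> v(2) x]
        u(1)[symmetric] v(1)[symmetric] j k by (simp_all add: supp_single[OF jk(1) s0(2)] supp_single[OF jk(2) s0(2)])
    then have "i \<in> supp u \<inter> supp v" using sx by auto
    with disjoint show False by simp
  qed
  with j have "supp (\<alpha> x) = {j}" by blast
  then show thesis by (rule that)
qed

definition coord_perm :: "((nat \<Rightarrow> 'a) \<Rightarrow> nat \<Rightarrow> 'a) \<Rightarrow> nat \<Rightarrow> nat" where
  "coord_perm \<alpha> i = (THE j. \<forall>s\<in>carrier S - {\<one>}. supp (\<alpha> (single i s)) = {j})"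

lemma supp_AutoGroup_single:
  assumes \<alpha>: "\<alpha> \<in> carrier AN" and i: "i \<in> I" and s: "s \<in> carrier S" "s \<noteq> \<one>"
  shows "supp (\<alpha> (single i s)) = {coord_perm \<alpha> i}"
proof -
  obtain j where j: "supp (\<alpha> (single i s)) = {j}"
    using AutoGroup_supp_singleton[OF \<alpha> single_closed[OF s(1)] supp_single[OF i s(2)]] .
  have "supp (\<alpha> (single i s')) = {j}" if s': "s' \<in> carrier S - {\<one>}" for s'
  proof -
    obtain j' where j': "supp (\<alpha> (single i s')) = {j'}"
      using AutoGroup_supp_singleton[OF \<alpha> single_closed supp_single[OF i]] s' by blast
    have "supp (single i s) \<inter> supp (single i s') \<noteq> {}"
      using s' by (simp add: supp_single[OF i s(2)] supp_single[OF i])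
    then have "supp (\<alpha> (single i s)) \<inter> supp (\<alpha> (single i s')) \<noteq> {}"
      using disjoint_supp_AutoGroup_iff[OF \<alpha> single_closed[OF s(1)] single_closed] s' by simp
    then show ?thesis using j j' by auto
  qed
  then have "coord_perm \<alpha> i = j"
    unfolding coord_perm_def using s by (intro the_equality) auto
  with j show ?thesis by simp
qed

lemma coord_perm_in:
  assumes "\<alpha> \<in> carrier AN" "i \<in> I"
  shows "coord_perm \<alpha> i \<in> I"
proof -
  obtain s0 where "s0 \<in> carrier S" "s0 \<noteq> \<one>" using simple_not_triv one_closed by blast
  then show ?thesis using supp_AutoGroup_single[OF assms] supp_subset by blast
qed

lemma bij_betw_coord_perm:
  assumes \<alpha>: "\<alpha> \<in> carrier AN"
  shows "bij_betw (coord_perm \<alpha>) I I"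
proof -
  obtain s0 where s0: "s0 \<in> carrier S" "s0 \<noteq> \<one>" using simple_not_triv one_closed by blast
  have "inj_on (coord_perm \<alpha>) I"
  proof (rule inj_onI)
    fix i i' assume i: "i \<in> I" "i' \<in> I" and eq: "coord_perm \<alpha> i = coord_perm \<alpha> i'"
    have "supp (\<alpha> (single i s0)) \<inter> supp (\<alpha> (single i' s0)) \<noteq> {}"
      using eq by (simp add: supp_AutoGroup_single[OF \<alpha> i(1) s0] supp_AutoGroup_single[OF \<alpha> i(2) s0])
    then have "supp (single i s0) \<inter> supp (single i' s0) \<noteq> {}"
      using disjoint_supp_AutoGroup_iff[OF \<alpha> single_closed[OF s0(1)] single_closed[OF s0(1)]] by simp
    then show "i = i'" using i s0 by (simp add: supp_single)
  qed
  moreover have "coord_perm \<alpha> ` I = I"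
    using endo_inj_surj[OF finite_lessThan _ calculation] coord_perm_in[OF \<alpha>] by blast
  ultimately show ?thesis by (simp add: bij_betw_def)
qed

lemma AutoGroup_single_apply_other:
  assumes \<alpha>: "\<alpha> \<in> carrier AN" and i: "i \<in> I" and s: "s \<in> carrier S"
    and j: "j \<in> I" "j \<noteq> coord_perm \<alpha> i"
  shows "\<alpha> (single i s) j = \<one>"
proof (cases "s = \<one>")
  case True
  then show ?thesis using j N.AutoGroup_apply_eq_one_iff[OF \<alpha> N.one_closed]
    by (simp add: single_one one_N)
next
  case False
  then show ?thesis using supp_AutoGroup_single[OF \<alpha> i s False] j by (auto simp: supp_def)
qed

text \<open>Write \<open>x = single i (x i) \<otimes> x'\<close> with \<open>x' i = \<one>\<close>; then \<open>\<alpha> x'\<close> vanishes at the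
  coordinate \<open>coord_perm \<alpha> i\<close>.\<close>
lemma AutoGroup_apply_coord_perm_single:
  assumes \<alpha>: "\<alpha> \<in> carrier AN" and x: "x \<in> carrier N" and i: "i \<in> I"
  shows "\<alpha> x (coord_perm \<alpha> i) = \<alpha> (single i (x i)) (coord_perm \<alpha> i)"
proof -
  obtain s0 where s0: "s0 \<in> carrier S" "s0 \<noteq> \<one>" using simple_not_triv one_closed by blast
  define x' where "x' = (\<lambda>j\<in>I. if j = i then \<one> else x j)"
  have x': "x' \<in> carrier N"
    unfolding x'_def carrier_N using N_apply_closed[OF x] by (simp add: restrict_PiE_iff)
  have xi: "x i \<in> carrier S" by (rule N_apply_closed[OF x i])
  have "single i (x i) \<otimes>\<^bsub>N\<^esub> x' = x"
    by (rule N_eqI) (use x x' xi N_apply_closed[OF x] in \<open>simp_all add: single_closed mult_N_apply single_apply x'_def\<close>)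
  then have decomp: "\<alpha> x = \<alpha> (single i (x i)) \<otimes>\<^bsub>N\<^esub> \<alpha> x'"
    using hom_mult[OF AutoGroup_hom[OF \<alpha>] single_closed[where i = i, OF xi] x'] by simp
  have "i \<notin> supp x'" by (simp add: supp_def x'_def)
  then have "supp x' \<inter> supp (single i s0) = {}" by (simp add: supp_single[OF i s0(2)])
  then have "coord_perm \<alpha> i \<notin> supp (\<alpha> x')"
    using disjoint_supp_AutoGroup_iff[OF \<alpha> x' single_closed[where i = i, OF s0(1)]]
    by (simp add: supp_AutoGroup_single[OF \<alpha> i s0])
  then have "\<alpha> x' (coord_perm \<alpha> i) = \<one>"
    using coord_perm_in[OF \<alpha> i] by (simp add: supp_def)
  with decomp show ?thesis
    using coord_perm_in[OF \<alpha> i] N_apply_closed[OF AutoGroup_closed[OF \<alpha> single_closed[OF xi]]]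
    by (simp add: mult_N_apply)
qed

definition coord_auto :: "((nat \<Rightarrow> 'a) \<Rightarrow> nat \<Rightarrow> 'a) \<Rightarrow> nat \<Rightarrow> 'a \<Rightarrow> 'a" where
  "coord_auto \<alpha> i = (\<lambda>s\<in>carrier S. \<alpha> (single i s) (coord_perm \<alpha> i))"

lemma AutoGroup_apply_coord_perm:
  "\<alpha> \<in> carrier AN \<Longrightarrow> x \<in> carrier N \<Longrightarrow> i \<in> I \<Longrightarrow> \<alpha> x (coord_perm \<alpha> i) = coord_auto \<alpha> i (x i)"
  using AutoGroup_apply_coord_perm_single N_apply_closed by (simp add: coord_auto_def)

lemma coord_auto_in_AutoGroup:
  assumes \<alpha>: "\<alpha> \<in> carrier AN" and i: "i \<in> I"
  shows "coord_auto \<alpha> i \<in> carrier AS"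
proof -
  have j: "coord_perm \<alpha> i \<in> I" by (rule coord_perm_in[OF \<alpha> i])
  have closed: "coord_auto \<alpha> i s \<in> carrier S" if "s \<in> carrier S" for s
    using N_apply_closed[OF AutoGroup_closed[OF \<alpha> single_closed[OF that]] j] that
    by (simp add: coord_auto_def)
  have hom: "coord_auto \<alpha> i \<in> hom S S"
  proof (rule homI)
    fix s s' assume s: "s \<in> carrier S" and s': "s' \<in> carrier S"
    have "\<alpha> (single i (s \<otimes> s')) = \<alpha> (single i s) \<otimes>\<^bsub>N\<^esub> \<alpha> (single i s')"
      using hom_mult[OF AutoGroup_hom[OF \<alpha>] single_closed[where i = i, OF s] single_closed[where i = i, OF s']]
      by (simp add: single_mult s s')
    then show "coord_auto \<alpha> i (s \<otimes> s') = coord_auto \<alpha> i s \<otimes> coord_auto \<alpha> i s'"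
      using s s' j by (simp add: coord_auto_def mult_N_apply)
  qed (rule closed)
  have "inj_on (coord_auto \<alpha> i) (carrier S)"
  proof (rule inj_onI)
    fix s s' assume s: "s \<in> carrier S" and s': "s' \<in> carrier S"
      and eq: "coord_auto \<alpha> i s = coord_auto \<alpha> i s'"
    have "\<alpha> (single i s) = \<alpha> (single i s')"
      using AutoGroup_closed[OF \<alpha> single_closed[where i = i, OF s]]
        AutoGroup_closed[OF \<alpha> single_closed[where i = i, OF s']]
    proof (rule N_eqI)
      fix j assume "j \<in> I"
      then show "\<alpha> (single i s) j = \<alpha> (single i s') j"
        using eq s s' AutoGroup_single_apply_other[OF \<alpha> i] by (cases "j = coord_perm \<alpha> i") (simp_all add: coord_auto_def)
    qed
    then have "single i s = single i s'"
      using inj_on_eq_iff[OF bij_betw_imp_inj_on[OF AutoGroup_bij[OF \<alpha>]]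
          single_closed[where i = i, OF s] single_closed[where i = i, OF s']]
      by simp
    then have "single i s i = single i s' i" by simp
    then show "s = s'" using i by (simp add: single_apply)
  qed
  moreover have "coord_auto \<alpha> i ` carrier S = carrier S"
    using endo_inj_surj[OF finite_carrier _ calculation] closed by blast
  ultimately show ?thesis
    using hom by (intro AutoGroup_memI) (simp_all add: bij_betw_def coord_auto_def)
qed

definition wreath :: "(nat \<Rightarrow> 'a \<Rightarrow> 'a) \<Rightarrow> (nat \<Rightarrow> nat) \<Rightarrow> (nat \<Rightarrow> 'a) \<Rightarrow> nat \<Rightarrow> 'a" where
  "wreath \<psi> \<sigma> = (\<lambda>x\<in>carrier N. \<lambda>j\<in>I. \<psi> j (x (\<sigma> j)))"

lemma wreath_pow_apply:
  assumes \<sigma>: "\<sigma> ` I \<subseteq> I" and \<psi>: "\<psi> \<in> I \<rightarrow> carrier AS" and w: "wreath \<psi> \<sigma> \<in> carrier AN"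
    and x: "x \<in> carrier N" and j: "j \<in> I"
  shows "(wreath \<psi> \<sigma> [^]\<^bsub>AN\<^esub> k) x j = orbit_prod AS \<psi> \<sigma> k j (x ((\<sigma> ^^ k) j))"
  using x
proof (induct k arbitrary: x)
  case 0
  then show ?case using j by (simp add: AutoGroup_one N_apply_closed)
next
  case (Suc k)
  have k: "(\<sigma> ^^ k) j \<in> I" by (rule funpow_in_set[OF \<sigma> j])
  have "(wreath \<psi> \<sigma> [^]\<^bsub>AN\<^esub> Suc k) x j = (wreath \<psi> \<sigma> [^]\<^bsub>AN\<^esub> k) (wreath \<psi> \<sigma> x) j"
    using Suc.prems w by (simp add: AutoGroup_mult_apply)
  also have "\<dots> = orbit_prod AS \<psi> \<sigma> k j (wreath \<psi> \<sigma> x ((\<sigma> ^^ k) j))"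
    using Suc.hyps AutoGroup_closed[OF w Suc.prems] by simp
  also have "\<dots> = orbit_prod AS \<psi> \<sigma> k j (\<psi> ((\<sigma> ^^ k) j) (x ((\<sigma> ^^ Suc k) j)))"
    using Suc.prems k by (simp add: wreath_def)
  also have "\<dots> = orbit_prod AS \<psi> \<sigma> (Suc k) j (x ((\<sigma> ^^ Suc k) j))"
    using AutoGroup_mult_apply[OF AS.orbit_prod_closed[OF \<sigma> \<psi> j, of k] funcset_mem[OF \<psi> k]
        N_apply_closed[OF Suc.prems funpow_in_set[OF \<sigma> j, of "Suc k"]]]
    by simp
  finally show ?case .
qed

lemma wreath_pow_eq_one:
  assumes \<sigma>: "\<sigma> ` I \<subseteq> I" and \<psi>: "\<psi> \<in> I \<rightarrow> carrier AS" and w: "wreath \<psi> \<sigma> \<in> carrier AN"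
    and period: "\<And>j. j \<in> I \<Longrightarrow> (\<sigma> ^^ k) j = j"
    and one: "\<And>j. j \<in> I \<Longrightarrow> orbit_prod AS \<psi> \<sigma> k j = \<one>\<^bsub>AS\<^esub>"
  shows "wreath \<psi> \<sigma> [^]\<^bsub>AN\<^esub> k = \<one>\<^bsub>AN\<^esub>"
proof (rule extensionalityI)
  show "wreath \<psi> \<sigma> [^]\<^bsub>AN\<^esub> k \<in> extensional (carrier N)" "\<one>\<^bsub>AN\<^esub> \<in> extensional (carrier N)"
    using w by (simp_all add: AutoGroup_extensional)
  fix x assume x: "x \<in> carrier N"
  show "(wreath \<psi> \<sigma> [^]\<^bsub>AN\<^esub> k) x = \<one>\<^bsub>AN\<^esub> x"
    using AutoGroup_closed[OF AN.nat_pow_closed[OF w, of k] x] AutoGroup_closed[OF AN.one_closed x]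
  proof (rule N_eqI)
    fix j assume "j \<in> I"
    then show "(wreath \<psi> \<sigma> [^]\<^bsub>AN\<^esub> k) x j = \<one>\<^bsub>AN\<^esub> x j"
      using x N_apply_closed[OF x] by (simp add: wreath_pow_apply[OF \<sigma> \<psi> w x] period one AutoGroup_one)
  qed
qed

definition coord_perm_inv :: "((nat \<Rightarrow> 'a) \<Rightarrow> nat \<Rightarrow> 'a) \<Rightarrow> nat \<Rightarrow> nat" where
  "coord_perm_inv \<alpha> = inv_into I (coord_perm \<alpha>)"

lemma coord_perm_inv_in: "\<alpha> \<in> carrier AN \<Longrightarrow> j \<in> I \<Longrightarrow> coord_perm_inv \<alpha> j \<in> I"
  unfolding coord_perm_inv_def using bij_betw_coord_perm bij_betw_inv_into bij_betwE by metis

lemma coord_perm_coord_perm_inv: "\<alpha> \<in> carrier AN \<Longrightarrow> j \<in> I \<Longrightarrow> coord_perm \<alpha> (coord_perm_inv \<alpha> j) = j"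
  unfolding coord_perm_inv_def using bij_betw_coord_perm bij_betw_inv_into_right by metis

definition twist :: "((nat \<Rightarrow> 'a) \<Rightarrow> nat \<Rightarrow> 'a) \<Rightarrow> (nat \<Rightarrow> 'a) \<Rightarrow> nat \<Rightarrow> 'a \<Rightarrow> 'a" where
  "twist \<alpha> n j = inn S (n j) \<otimes>\<^bsub>AS\<^esub> coord_auto \<alpha> (coord_perm_inv \<alpha> j)"

lemma twist_in:
  assumes \<alpha>: "\<alpha> \<in> carrier AN" and n: "n \<in> carrier N"
  shows "twist \<alpha> n \<in> I \<rightarrow> carrier AS"
proof
  fix j assume j: "j \<in> I"
  show "twist \<alpha> n j \<in> carrier AS"
    using AS.m_closed[OF inn_in_AutoGroup[OF N_apply_closed[OF n j]]
        coord_auto_in_AutoGroup[OF \<alpha> coord_perm_inv_in[OF \<alpha> j]]]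
    by (simp add: twist_def)
qed

lemma inn_mult_AutoGroup_eq_wreath:
  assumes \<alpha>: "\<alpha> \<in> carrier AN" and n: "n \<in> carrier N"
  shows "inn N n \<otimes>\<^bsub>AN\<^esub> \<alpha> = wreath (twist \<alpha> n) (coord_perm_inv \<alpha>)"
proof (rule ext)
  fix x
  show "(inn N n \<otimes>\<^bsub>AN\<^esub> \<alpha>) x = wreath (twist \<alpha> n) (coord_perm_inv \<alpha>) x"
  proof (cases "x \<in> carrier N")
    case x: True
    have coordinate: "(inn N n \<otimes>\<^bsub>AN\<^esub> \<alpha>) x j = twist \<alpha> n j (x (coord_perm_inv \<alpha> j))" if j: "j \<in> I" for j
    proof -
      let ?i = "coord_perm_inv \<alpha> j"
      have i: "?i \<in> I" by (rule coord_perm_inv_in[OF \<alpha> j])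
      have "(inn N n \<otimes>\<^bsub>AN\<^esub> \<alpha>) x j = inn S (n j) (\<alpha> x (coord_perm \<alpha> ?i))"
        using n x j \<alpha> by (simp add: AutoGroup_mult_apply N.inn_in_AutoGroup inn_N_apply
            AutoGroup_closed coord_perm_coord_perm_inv)
      also have "\<dots> = twist \<alpha> n j (x ?i)"
        using AutoGroup_apply_coord_perm[OF \<alpha> x i] inn_in_AutoGroup[OF N_apply_closed[OF n j]]
          coord_auto_in_AutoGroup[OF \<alpha> i] N_apply_closed[OF x i]
        by (simp add: twist_def AutoGroup_mult_apply)
      finally show ?thesis .
    qed
    show ?thesis
      using AN.m_closed[OF N.inn_in_AutoGroup[OF n] \<alpha>, THEN AutoGroup_closed, OF x] x
      by (auto simp: wreath_def carrier_N PiE_iff extensional_def coordinate intro!: ext)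
  next
    case False
    then show ?thesis
      using AutoGroup_extensional[OF AN.m_closed[OF N.inn_in_AutoGroup[OF n] \<alpha>]]
      by (simp add: wreath_def extensional_def)
  qed
qed

lemma AutoGroup_eq_wreath:
  assumes "\<alpha> \<in> carrier AN"
  shows "\<alpha> = wreath (twist \<alpha> \<one>\<^bsub>N\<^esub>) (coord_perm_inv \<alpha>)"
  using inn_mult_AutoGroup_eq_wreath[OF assms N.one_closed] assms by (simp add: N.inn_one)

text \<open>Otherwise \<open>\<alpha> ^ Q = 1\<close> would carry the nontrivial coordinate \<open>k = (\<sigma> ^^ Q) j\<close> of
  \<open>single k s\<close> to position \<open>j \<noteq> k\<close>.\<close>
lemma coord_perm_inv_period:
  assumes \<alpha>: "\<alpha> \<in> carrier AN" and Q: "\<alpha> [^]\<^bsub>AN\<^esub> (Q :: nat) = \<one>\<^bsub>AN\<^esub>" and j: "j \<in> I"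
  shows "(coord_perm_inv \<alpha> ^^ Q) j = j"
proof (rule ccontr)
  define \<sigma> where "\<sigma> = coord_perm_inv \<alpha>"
  define k where "k = (\<sigma> ^^ Q) j"
  assume "(coord_perm_inv \<alpha> ^^ Q) j \<noteq> j"
  then have "k \<noteq> j" by (simp add: k_def \<sigma>_def)
  obtain s0 where s0: "s0 \<in> carrier S" "s0 \<noteq> \<one>" using simple_not_triv one_closed by blast
  have \<sigma>I: "\<sigma> ` I \<subseteq> I" using coord_perm_inv_in[OF \<alpha>] by (auto simp: \<sigma>_def)
  have \<psi>: "twist \<alpha> \<one>\<^bsub>N\<^esub> \<in> I \<rightarrow> carrier AS" by (rule twist_in[OF \<alpha> N.one_closed])
  have w: "wreath (twist \<alpha> \<one>\<^bsub>N\<^esub>) \<sigma> \<in> carrier AN" using \<alpha> AutoGroup_eq_wreath[OF \<alpha>] by (simp add: \<sigma>_def)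
  have x: "single k s0 \<in> carrier N" by (rule single_closed[OF s0(1)])
  have "orbit_prod AS (twist \<alpha> \<one>\<^bsub>N\<^esub>) \<sigma> Q j s0 = (\<alpha> [^]\<^bsub>AN\<^esub> Q) (single k s0) j"
    using wreath_pow_apply[OF \<sigma>I \<psi> w x j] funpow_in_set[OF \<sigma>I j] AutoGroup_eq_wreath[OF \<alpha>]
    by (simp add: single_apply k_def \<sigma>_def)
  also have "\<dots> = \<one>" using Q x j \<open>k \<noteq> j\<close> by (simp add: AutoGroup_one single_apply)
  finally show False
    using AutoGroup_apply_eq_one_iff[OF AS.orbit_prod_closed[OF \<sigma>I \<psi> j] s0(1)] s0(2) by simp
qed

lemma coord_perm_inv_periodic:
  assumes \<alpha>: "\<alpha> \<in> carrier AN"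
  obtains Q where "0 < Q" "\<And>j. j \<in> I \<Longrightarrow> (coord_perm_inv \<alpha> ^^ Q) j = j"
proof -
  have "0 < AN.ord \<alpha>" using AN.ord_ge_1[OF finite_AutoGroup[OF finite_carrier_N] \<alpha>] by simp
  then show thesis using that coord_perm_inv_period[OF \<alpha> AN.pow_ord_eq_1[OF \<alpha>]] by blast
qed

lemma coord_perm_inv_p_power_period:
  assumes p: "Factorial_Ring.prime p" and \<alpha>: "p_element AN p \<alpha>"
  obtains a where "\<And>j. j \<in> I \<Longrightarrow> (coord_perm_inv \<alpha> ^^ p ^ a) j = j"
proof -
  have "\<exists>a. \<alpha> [^]\<^bsub>AN\<^esub> (p ^ a :: nat) = \<one>\<^bsub>AN\<^esub>"
    using \<alpha> by (simp add: AN.p_element_iff_pow_eq_one[OF p])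
  then obtain a where "\<alpha> [^]\<^bsub>AN\<^esub> (p ^ a :: nat) = \<one>\<^bsub>AN\<^esub>" ..
  moreover have "\<alpha> \<in> carrier AN" using \<alpha> by (simp add: p_element_def)
  ultimately show thesis using coord_perm_inv_period that by blast
qed

text \<open>Raising to the power \<open>p ^ E * p ^ a\<close>, where \<open>p ^ a\<close> is a period of the coordinate
  permutation, makes every product over a cycle trivial.\<close>
lemma p_element_inn_mult_AutoGroup:
  assumes p: "Factorial_Ring.prime p" and \<alpha>: "p_element AN p \<alpha>" and n: "n \<in> carrier N"
    and reps: "\<And>r. r \<in> orbit_reps I (coord_perm_inv \<alpha>) \<Longrightarrow> p_element AS p
      (orbit_prod AS (twist \<alpha> n) (coord_perm_inv \<alpha>) (least_power (coord_perm_inv \<alpha>) r) r)"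
  shows "p_element AN p (inn N n \<otimes>\<^bsub>AN\<^esub> \<alpha>)"
proof -
  define \<sigma> where "\<sigma> = coord_perm_inv \<alpha>"
  define \<psi> where "\<psi> = twist \<alpha> n"
  have \<alpha>_in: "\<alpha> \<in> carrier AN" using \<alpha> by (simp add: p_element_def)
  have \<sigma>I: "\<sigma> ` I \<subseteq> I" using coord_perm_inv_in[OF \<alpha>_in] by (auto simp: \<sigma>_def)
  have \<psi>: "\<psi> \<in> I \<rightarrow> carrier AS" unfolding \<psi>_def by (rule twist_in[OF \<alpha>_in n])
  obtain a where period: "\<And>j. j \<in> I \<Longrightarrow> (\<sigma> ^^ p ^ a) j = j"
    using coord_perm_inv_p_power_period[OF p \<alpha>] unfolding \<sigma>_def by blast
  have p0: "0 < p ^ a" using p by (simp add: prime_gt_0_nat)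
  have "finite (orbit_reps I \<sigma>)" by (rule finite_subset[of _ I]) (auto simp: orbit_reps_def)
  then obtain E where E: "\<forall>r\<in>orbit_reps I \<sigma>.
      orbit_prod AS \<psi> \<sigma> (least_power \<sigma> r) r [^]\<^bsub>AS\<^esub> (p ^ E :: nat) = \<one>\<^bsub>AS\<^esub>"
    using AS.p_elements_common_exponent[where b = "\<lambda>r. orbit_prod AS \<psi> \<sigma> (least_power \<sigma> r) r",
        OF _ p reps[folded \<sigma>_def \<psi>_def]] by blast
  define q where "q = p ^ E * p ^ a"
  have at_reps: "orbit_prod AS \<psi> \<sigma> q r = \<one>\<^bsub>AS\<^esub>" if r: "r \<in> orbit_reps I \<sigma>" for r
    using AS.orbit_prod_mult_period_eq_one[OF \<sigma>I \<psi> _ p0 period, of r "p ^ E"] r E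
    by (simp add: orbit_reps_def q_def)
  have everywhere: "orbit_prod AS \<psi> \<sigma> q j = \<one>\<^bsub>AS\<^esub>" if j: "j \<in> I" for j
  proof -
    obtain r k where r: "r \<in> orbit_reps I \<sigma>" and "j = (\<sigma> ^^ k) r"
      using orbit_reps_exists[OF \<sigma>I j p0 period[OF j]] .
    moreover have "(\<sigma> ^^ q) r = r"
      using r funpow_mult_fixed[OF period] by (simp add: orbit_reps_def q_def)
    ultimately show ?thesis
      using AS.orbit_prod_period_along_orbit[OF \<sigma>I \<psi> _ _ at_reps[OF r]] r by (simp add: orbit_reps_def)
  qed
  have "(\<sigma> ^^ q) j = j" if "j \<in> I" for j
    using funpow_mult_fixed[OF period[OF that]] by (simp add: q_def)
  then have "(inn N n \<otimes>\<^bsub>AN\<^esub> \<alpha>) [^]\<^bsub>AN\<^esub> q = \<one>\<^bsub>AN\<^esub>"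
    using wreath_pow_eq_one[OF \<sigma>I \<psi> _ _ everywhere] inn_mult_AutoGroup_eq_wreath[OF \<alpha>_in n]
      AN.m_closed[OF N.inn_in_AutoGroup[OF n] \<alpha>_in]
    by (simp add: \<sigma>_def \<psi>_def)
  then have "(inn N n \<otimes>\<^bsub>AN\<^esub> \<alpha>) [^]\<^bsub>AN\<^esub> (p ^ (E + a) :: nat) = \<one>\<^bsub>AN\<^esub>"
    by (simp add: q_def power_add)
  then show ?thesis
    using AN.m_closed[OF N.inn_in_AutoGroup[OF n] \<alpha>_in]
    by (auto simp: AN.p_element_iff_pow_eq_one[OF p])
qed

text \<open>The cycle through \<open>r\<close> meets no other representative, so \<open>n\<close> enters only through
  \<open>n r\<close> and the coordinates off the representatives.\<close>
lemma orbit_prod_twist_at_orbit_rep: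
  assumes \<alpha>: "\<alpha> \<in> carrier AN" and n: "n \<in> carrier N" and n': "n' \<in> carrier N"
    and r: "r \<in> orbit_reps I (coord_perm_inv \<alpha>)"
    and agree: "\<And>j. j \<in> I - orbit_reps I (coord_perm_inv \<alpha>) \<Longrightarrow> n j = n' j"
  shows "orbit_prod AS (twist \<alpha> n) (coord_perm_inv \<alpha>) (least_power (coord_perm_inv \<alpha>) r) r =
    inn S (n r) \<otimes>\<^bsub>AS\<^esub> (coord_auto \<alpha> (coord_perm_inv \<alpha> r) \<otimes>\<^bsub>AS\<^esub>
      orbit_prod AS (twist \<alpha> n') (coord_perm_inv \<alpha>) (least_power (coord_perm_inv \<alpha>) r - 1) (coord_perm_inv \<alpha> r))"
proof -
  define \<sigma> where "\<sigma> = coord_perm_inv \<alpha>"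
  define m where "m = least_power \<sigma> r - 1"
  obtain Q where Q: "0 < Q" "\<And>j. j \<in> I \<Longrightarrow> (\<sigma> ^^ Q) j = j"
    using coord_perm_inv_periodic[OF \<alpha>] unfolding \<sigma>_def by blast
  have \<sigma>I: "\<sigma> ` I \<subseteq> I" using coord_perm_inv_in[OF \<alpha>] by (auto simp: \<sigma>_def)
  have rI: "r \<in> I" using r by (simp add: orbit_reps_def)
  have \<sigma>r: "\<sigma> r \<in> I" using \<sigma>I rI by blast
  have period: "(\<sigma> ^^ Q) r = r" by (rule Q(2)[OF rI])
  have lp: "least_power \<sigma> r = 1 + m" using least_powerI(2)[OF period Q(1)] by (simp add: m_def)
  have tail: "orbit_prod AS (twist \<alpha> n) \<sigma> m (\<sigma> r) = orbit_prod AS (twist \<alpha> n') \<sigma> m (\<sigma> r)"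
  proof (rule orbit_prod_cong)
    fix i assume "i < m"
    then have "(\<sigma> ^^ Suc i) r \<notin> orbit_reps I \<sigma>"
      using orbit_reps_unique[OF r[folded \<sigma>_def] Q(1) period, of "Suc i"] lp by simp
    then have "n ((\<sigma> ^^ Suc i) r) = n' ((\<sigma> ^^ Suc i) r)"
      using agree funpow_in_set[OF \<sigma>I rI, of "Suc i"] by (simp add: \<sigma>_def)
    moreover have "(\<sigma> ^^ i) (\<sigma> r) = (\<sigma> ^^ Suc i) r" by (simp add: funpow_swap1)
    ultimately show "twist \<alpha> n ((\<sigma> ^^ i) (\<sigma> r)) = twist \<alpha> n' ((\<sigma> ^^ i) (\<sigma> r))"
      by (simp add: twist_def)
  qed
  have split: "orbit_prod AS (twist \<alpha> n) \<sigma> (1 + m) r =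
      twist \<alpha> n r \<otimes>\<^bsub>AS\<^esub> orbit_prod AS (twist \<alpha> n) \<sigma> m (\<sigma> r)"
    using AS.orbit_prod_add[OF \<sigma>I twist_in[OF \<alpha> n] rI, of 1 m] funcset_mem[OF twist_in[OF \<alpha> n] rI]
    by simp
  have "orbit_prod AS (twist \<alpha> n) \<sigma> (least_power \<sigma> r) r =
      twist \<alpha> n r \<otimes>\<^bsub>AS\<^esub> orbit_prod AS (twist \<alpha> n') \<sigma> m (\<sigma> r)"
    by (simp only: lp split tail)
  also have "\<dots> = inn S (n r) \<otimes>\<^bsub>AS\<^esub> (coord_auto \<alpha> (\<sigma> r) \<otimes>\<^bsub>AS\<^esub> orbit_prod AS (twist \<alpha> n') \<sigma> m (\<sigma> r))"
    using inn_in_AutoGroup[OF N_apply_closed[OF n rI]] coord_auto_in_AutoGroup[OF \<alpha> \<sigma>r[unfolded \<sigma>_def]]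
      AS.orbit_prod_closed[OF \<sigma>I twist_in[OF \<alpha> n'] \<sigma>r]
    by (simp add: twist_def AS.m_assoc \<sigma>_def)
  finally show ?thesis by (simp add: \<sigma>_def m_def)
qed

lemma inj_on_inn_N: "inj_on (inn N) (carrier N)"
proof (rule inj_onI)
  fix n n' assume n: "n \<in> carrier N" and n': "n' \<in> carrier N" and eq: "inn N n = inn N n'"
  show "n = n'"
  proof (rule N_eqI[OF n n'])
    fix j assume j: "j \<in> I"
    have "inn S (n j) z = inn S (n' j) z" for z
    proof (cases "z \<in> carrier S")
      case True
      have "inn N n (single j z) j = inn N n' (single j z) j" using eq by simp
      with True show ?thesis using n n' j by (simp add: inn_N_apply single_closed single_apply)
    next
      case False
      then show ?thesis by (simp add: inn_def)
    qed
    then show "n j = n' j"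
      using inj_onD[OF inj_on_inn _ N_apply_closed[OF n j] N_apply_closed[OF n' j]] by blast
  qed
qed

lemma card_p_elements_inn_mult_ge:
  assumes p: "Factorial_Ring.prime p" and \<alpha>: "p_element AN p \<alpha>"
    and hyp: "\<forall>\<beta>\<in>carrier AS. \<exists>\<gamma>\<in>Inn S #>\<^bsub>AS\<^esub> \<beta>. p_element AS p \<gamma> \<and> M \<le> card (S_class S \<gamma>)"
  shows "M ^ t \<le> card {n \<in> carrier N. p_element AN p (inn N n \<otimes>\<^bsub>AN\<^esub> \<alpha>)}"
proof -
  define \<sigma> where "\<sigma> = coord_perm_inv \<alpha>"
  define T where "T = orbit_reps I \<sigma>"
  define fill where "fill f = (\<lambda>j\<in>I. if j \<in> T then \<one> else f j)" for f :: "nat \<Rightarrow> 'a"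
  define c where "c f r = coord_auto \<alpha> (\<sigma> r) \<otimes>\<^bsub>AS\<^esub>
    orbit_prod AS (twist \<alpha> (fill f)) \<sigma> (least_power \<sigma> r - 1) (\<sigma> r)" for f r
  define C where "C f r = {g \<in> carrier S. p_element AS p (inn S g \<otimes>\<^bsub>AS\<^esub> c f r)}" for f r
  have \<alpha>_in: "\<alpha> \<in> carrier AN" using \<alpha> by (simp add: p_element_def)
  have \<sigma>I: "\<sigma> ` I \<subseteq> I" using coord_perm_inv_in[OF \<alpha>_in] by (auto simp: \<sigma>_def)
  have TI: "T \<subseteq> I" by (auto simp: T_def orbit_reps_def)
  have fill: "fill f \<in> carrier N" if f: "f \<in> (\<Pi>\<^sub>E j\<in>I - T. carrier S)" for f
  proof -
    have "f j \<in> carrier S" if "j \<in> I - T" for j by (rule PiE_mem[OF f that])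
    then show ?thesis unfolding fill_def carrier_N restrict_PiE_iff by simp
  qed
  have C_card: "M \<le> card (C f r)" if f: "f \<in> (\<Pi>\<^sub>E j\<in>I - T. carrier S)" and r: "r \<in> T" for f r
  proof -
    have \<sigma>r: "\<sigma> r \<in> I" using r TI \<sigma>I by blast
    have "c f r \<in> carrier AS"
      unfolding c_def
      by (rule AS.m_closed[OF coord_auto_in_AutoGroup[OF \<alpha>_in \<sigma>r]
            AS.orbit_prod_closed[OF \<sigma>I twist_in[OF \<alpha>_in fill[OF f]] \<sigma>r]])
    then show ?thesis unfolding C_def by (rule card_coset_p_elements_ge[OF finite_carrier p hyp])
  qed
  have "M \<le> card (carrier S)"
    using card_coset_p_elements_ge[OF finite_carrier p hyp AS.one_closed]
      card_mono[OF finite_carrier, of "{g \<in> carrier S. p_element AS p (inn S g \<otimes>\<^bsub>AS\<^esub> \<one>\<^bsub>AS\<^esub>)}"]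
    by force
  then have "M ^ card I \<le> card {y \<in> (\<Pi>\<^sub>E j\<in>I. carrier S). \<forall>r\<in>T. y r \<in> C (restrict y (I - T)) r}"
    using C_card by (intro card_PiE_constrained_ge[OF finite_lessThan TI finite_carrier]) (auto simp: C_def)
  also have "\<dots> \<le> card {n \<in> carrier N. p_element AN p (inn N n \<otimes>\<^bsub>AN\<^esub> \<alpha>)}"
  proof (rule card_mono)
    show "finite {n \<in> carrier N. p_element AN p (inn N n \<otimes>\<^bsub>AN\<^esub> \<alpha>)}"
      using finite_carrier_N by simp
  next
    show "{y \<in> (\<Pi>\<^sub>E j\<in>I. carrier S). \<forall>r\<in>T. y r \<in> C (restrict y (I - T)) r} \<subseteq>
        {n \<in> carrier N. p_element AN p (inn N n \<otimes>\<^bsub>AN\<^esub> \<alpha>)}"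
    proof (intro subsetI CollectI conjI; elim CollectE conjE)
      fix y assume y: "y \<in> (\<Pi>\<^sub>E j\<in>I. carrier S)" and C_y: "\<forall>r\<in>T. y r \<in> C (restrict y (I - T)) r"
      then show y_N: "y \<in> carrier N" by (simp add: carrier_N)
      have y': "fill (restrict y (I - T)) \<in> carrier N" using y by (intro fill) auto
      show "p_element AN p (inn N y \<otimes>\<^bsub>AN\<^esub> \<alpha>)"
      proof (rule p_element_inn_mult_AutoGroup[OF p \<alpha> y_N])
        fix r assume r: "r \<in> orbit_reps I (coord_perm_inv \<alpha>)"
        then show "p_element AS p (orbit_prod AS (twist \<alpha> y) (coord_perm_inv \<alpha>)
            (least_power (coord_perm_inv \<alpha>) r) r)"
          using orbit_prod_twist_at_orbit_rep[OF \<alpha>_in y_N y' r] C_y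
          by (simp add: C_def c_def \<sigma>_def T_def fill_def)
      qed
    qed
  qed
  finally show ?thesis by simp
qed

lemma card_Ord_p_coset_ge:
  assumes p: "Factorial_Ring.prime p" and \<alpha>: "p_element AN p \<alpha>"
    and hyp: "\<forall>\<beta>\<in>carrier AS. \<exists>\<gamma>\<in>Inn S #>\<^bsub>AS\<^esub> \<beta>. p_element AS p \<gamma> \<and> M \<le> card (S_class S \<gamma>)"
  shows "M ^ t \<le> card (Ord_p AN (Inn N #>\<^bsub>AN\<^esub> \<alpha>) p)"
proof -
  have \<alpha>_in: "\<alpha> \<in> carrier AN" using \<alpha> by (simp add: p_element_def)
  let ?P = "{n \<in> carrier N. p_element AN p (inn N n \<otimes>\<^bsub>AN\<^esub> \<alpha>)}"
  have "inj_on (\<lambda>n. inn N n \<otimes>\<^bsub>AN\<^esub> \<alpha>) ?P"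
    using inj_onD[OF inj_on_inn_N] AN.r_cancel[OF _ N.inn_in_AutoGroup N.inn_in_AutoGroup] \<alpha>_in
    by (intro inj_onI) auto
  moreover have "(\<lambda>n. inn N n \<otimes>\<^bsub>AN\<^esub> \<alpha>) ` ?P \<subseteq> Ord_p AN (Inn N #>\<^bsub>AN\<^esub> \<alpha>) p"
    by (auto simp: Ord_p_def r_coset_def Inn_def)
  moreover have "finite (Ord_p AN (Inn N #>\<^bsub>AN\<^esub> \<alpha>) p)"
    using finite_AutoGroup[OF finite_carrier_N] by (rule finite_subset[rotated]) (auto simp: Ord_p_def p_element_def)
  ultimately have "card ?P \<le> card (Ord_p AN (Inn N #>\<^bsub>AN\<^esub> \<alpha>) p)" by (rule card_inj_on_le)
  with card_p_elements_inn_mult_ge[OF p \<alpha> hyp] show ?thesis by linarith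
qed

end

theorem lemma2p2:
  fixes S :: "'a monoid" and t :: nat and p :: nat and M :: nat
  assumes "simple_group S"
    and "finite (carrier S)"
    and "\<not> comm_group S"
    and "t > 0"
    and "Factorial_Ring.prime p"
    and "\<forall>\<alpha> \<in> carrier (AutoGroup S). \<exists>\<beta> \<in> Inn S #>\<^bsub>AutoGroup S\<^esub> \<alpha>.
           p_element (AutoGroup S) p \<beta> \<and> card (S_class S \<beta>) \<ge> M"
  shows "M ^ t \<le> f_p p (power_group S t)"
proof -
  interpret power_of_nonabelian_simple S t
    using assms(1-3)
    by (simp add: power_of_nonabelian_simple_def power_of_nonabelian_simple_axioms_def
        nonabelian_simple_group_def nonabelian_simple_group_axioms_def)
  let ?values = "{card (Ord_p AN (Inn N #>\<^bsub>AN\<^esub> \<alpha>) p) | \<alpha>. p_element AN p \<alpha>}"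
  have "p_element AN p \<one>\<^bsub>AN\<^esub>" by (auto simp: p_element_def intro: exI[of _ 0])
  then have nonempty: "?values \<noteq> {}" by blast
  have "finite {\<alpha>. p_element AN p \<alpha>}"
    by (rule finite_subset[OF _ finite_AutoGroup[OF finite_carrier_N]]) (auto simp: p_element_def)
  then have finite: "finite ?values" by (simp add: setcompr_eq_image)
  have bound: "\<forall>v\<in>?values. M ^ t \<le> v" using card_Ord_p_coset_ge[OF assms(5) _ assms(6)] by auto
  show ?thesis unfolding f_p_def using finite nonempty bound by simp
qed

end
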